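(* For every $A\in\Theta^\pm_\triangle(n)$, the set $\{B\in\Theta^\pm_\triangle(n):B\prec A\}$ is finite. Hence, for every $A'\in\widetilde\Theta_\triangle(n)$, the interval $(-\infty,A']=\{B\in\widetilde\Theta_\triangle(n):B\sqsubseteq A'\}$ is finite.
   Context: $n\ge2$. $\widetilde\Theta_\triangle(n)$ is the set of matrices $A=(a_{i,j})_{i,j\in\mathbb Z}$ with integer entries, $a_{i,j}\ge0$ for $i\ne j$, $a_{i+n,j+n}=a_{i,j}$ for all $i,j$, and such that each row and each column has finitely many nonzero entries; $\Theta^\pm_\triangle(n)$ is the set of such matrices with nonnegative entries and zero diagonal. $\mathrm{ro}(A)=(\sum_ja_{i,j})_{i\in\mathbb Z}$, $\mathrm{co}(A)=(\sum_ia_{i,j})_{j\in\mathbb Z}$. For $i\ne j$ let $\sigma_{i,j}(A)=\sum_{s\le i,t\ge j}a_{s,t}$ if $i<j$ and $\sigma_{i,j}(A)=\sum_{s\ge i,t\le j}a_{s,t}$ if $i>j$. $B\preccurlyeq A$ iff $\sigma_{i,j}(B)\le\sigma_{i,j}(A)$ for all $i\ne j$; $B\prec A$ iff $B\preccurlyeq A$ and $\sigma_{i,j}(B)<\sigma_{i,j}(A)$ for some $i\ne j$; $B\sqsubseteq A$ iff $B\preccurlyeq A$, $\mathrm{ro}(B)=\mathrm{ro}(A)$ and $\mathrm{co}(B)=\mathrm{co}(A)$. *)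

theory Defs
  imports Main
begin

type_synonym zmat = "int \<Rightarrow> int \<Rightarrow> int"

definition Theta_tilde :: "int \<Rightarrow> zmat set" where
  "Theta_tilde n = {A. (\<forall>i j. i \<noteq> j \<longrightarrow> 0 \<le> A i j)
     \<and> (\<forall>i j. A (i + n) (j + n) = A i j)
     \<and> (\<forall>i. finite {j. A i j \<noteq> 0})
     \<and> (\<forall>j. finite {i. A i j \<noteq> 0})}"

definition Theta_pm :: "int \<Rightarrow> zmat set" where
  "Theta_pm n = {A \<in> Theta_tilde n. (\<forall>i j. 0 \<le> A i j) \<and> (\<forall>i. A i i = 0)}"

definition ro :: "zmat \<Rightarrow> int \<Rightarrow> int" where
  "ro A i = (\<Sum>j\<in>{j. A i j \<noteq> 0}. A i j)"

definition co :: "zmat \<Rightarrow> int \<Rightarrow> int" where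
  "co A j = (\<Sum>i\<in>{i. A i j \<noteq> 0}. A i j)"

definition sigma :: "int \<Rightarrow> int \<Rightarrow> zmat \<Rightarrow> int" where
  "sigma i j A =
     (if i < j then (\<Sum>(s,t)\<in>{(s,t). s \<le> i \<and> j \<le> t \<and> A s t \<noteq> 0}. A s t)
      else (\<Sum>(s,t)\<in>{(s,t). i \<le> s \<and> t \<le> j \<and> A s t \<noteq> 0}. A s t))"

definition preceq :: "zmat \<Rightarrow> zmat \<Rightarrow> bool" where
  "preceq B A \<longleftrightarrow> (\<forall>i j. i \<noteq> j \<longrightarrow> sigma i j B \<le> sigma i j A)"

definition prec :: "zmat \<Rightarrow> zmat \<Rightarrow> bool" where
  "prec B A \<longleftrightarrow> preceq B A \<and> (\<exists>i j. i \<noteq> j \<and> sigma i j B < sigma i j A)"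

definition sqsubseteq :: "zmat \<Rightarrow> zmat \<Rightarrow> bool" where
  "sqsubseteq B A \<longleftrightarrow> preceq B A \<and> ro B = ro A \<and> co B = co A"

end

theory Submission
  imports Defs "HOL-Library.FuncSet"
begin

text \<open>A matrix in \<open>\<Theta>\<^sub>\<triangle>(n)\<close> has finitely many nonzero entries in each of the rows
  \<open>0, \<dots>, n - 1\<close>, so by periodicity its support lies in a band \<open>|s - t| \<le> D\<close>. If \<open>B \<preccurlyeq> A\<close>,
  an off-diagonal entry \<open>b\<^sub>s\<^sub>t\<close> is one of the nonnegative summands of \<open>\<sigma>\<^sub>s\<^sub>,\<^sub>t(B)\<close>, so
  \<open>0 \<le> b\<^sub>s\<^sub>t \<le> \<sigma>\<^sub>s\<^sub>,\<^sub>t(A)\<close>, and \<open>\<sigma>\<^sub>s\<^sub>,\<^sub>t(A) = 0\<close> outside the band of \<open>A\<close>. Hence the off-diagonal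
  part of \<open>B\<close> is determined by finitely many bounded entries in the rows \<open>0, \<dots>, n - 1\<close>.
  The diagonal is zero in \<open>\<Theta>\<^sup>\<plusminus>\<^sub>\<triangle>(n)\<close>, and it is recovered from the row sums when \<open>B \<sqsubseteq> A\<close>.\<close>

definition banded :: "int \<Rightarrow> zmat \<Rightarrow> bool" where
  "banded D A \<longleftrightarrow> (\<forall>s t. A s t \<noteq> 0 \<longrightarrow> \<bar>s - t\<bar> \<le> D)"

lemma bandedD: "banded D A \<Longrightarrow> A s t \<noteq> 0 \<Longrightarrow> \<bar>s - t\<bar> \<le> D"
  by (simp add: banded_def)

lemma Theta_tilde_shift:
  assumes "A \<in> Theta_tilde n"
  shows "A (i + k * n) (j + k * n) = A i j"
proof (induction k rule: int_induct[where k = 0])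
  case base
  show ?case by simp
next
  case (step1 k)
  have "A (i + (k + 1) * n) (j + (k + 1) * n) = A ((i + k * n) + n) ((j + k * n) + n)"
    by (simp add: algebra_simps)
  with step1 assms show ?case by (simp add: Theta_tilde_def)
next
  case (step2 k)
  have "A (i + (k - 1) * n + n) (j + (k - 1) * n + n) = A (i + k * n) (j + k * n)"
    by (simp add: algebra_simps)
  with step2 assms show ?case by (simp add: Theta_tilde_def)
qed

lemma Theta_tilde_banded:
  assumes A: "A \<in> Theta_tilde n" and n: "n > 0"
  obtains D where "D \<ge> 0" "banded D A"
proof
  define U where "U = (\<Union>r\<in>{0..<n}. (\<lambda>j. \<bar>j - r\<bar>) ` {j. A r j \<noteq> 0})"
  have fin: "finite U" unfolding U_def using A by (auto simp: Theta_tilde_def)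
  show "Max (insert 0 U) \<ge> 0" using fin by simp
  show "banded (Max (insert 0 U)) A"
    unfolding banded_def
  proof (intro allI impI)
    fix s t assume "A s t \<noteq> 0"
    define r k where "r = s mod n" and "k = s div n"
    have s: "s = r + k * n" unfolding r_def k_def by simp
    have "A r (t - k * n) = A s t" using Theta_tilde_shift[OF A, of r k "t - k * n"] s by simp
    with \<open>A s t \<noteq> 0\<close> have "\<bar>(t - k * n) - r\<bar> \<in> (\<lambda>j. \<bar>j - r\<bar>) ` {j. A r j \<noteq> 0}" by simp
    moreover have "r \<in> {0..<n}" unfolding r_def using n by simp
    ultimately have "\<bar>(t - k * n) - r\<bar> \<in> U" unfolding U_def by blast
    moreover have "\<bar>(t - k * n) - r\<bar> = \<bar>s - t\<bar>" using s by simp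
    ultimately show "\<bar>s - t\<bar> \<le> Max (insert 0 U)" using fin by (metis Max_ge finite_insert insertCI)
  qed
qed

lemma le_sum_nonneg_support:
  fixes f :: "'a \<Rightarrow> 'b::{semiring_1, ordered_comm_monoid_add}"
  assumes "finite S" "\<And>y. y \<in> S \<Longrightarrow> 0 \<le> f y" "f x \<noteq> 0 \<Longrightarrow> x \<in> S"
  shows "f x \<le> sum f S"
proof (cases "f x = 0")
  case True
  then show ?thesis using assms(2) by (simp add: sum_nonneg)
next
  case False
  then show ?thesis using assms by (intro member_le_sum) auto
qed

lemma Theta_tilde_entry_le_sigma:
  assumes B: "B \<in> Theta_tilde n" "banded D B" and "s \<noteq> t"
  shows "B s t \<le> sigma s t B"
proof -
  have nonneg: "\<And>a b. a \<noteq> b \<Longrightarrow> 0 \<le> B a b" using B by (simp add: Theta_tilde_def)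
  show ?thesis
  proof (cases "s < t")
    case True
    let ?S = "{(a, b). a \<le> s \<and> t \<le> b \<and> B a b \<noteq> 0}"
    have "finite ?S"
      by (rule finite_subset[of _ "{t - D..s} \<times> {t..s + D}"]) (use B in \<open>force dest: bandedD\<close>, simp)
    then have "B s t \<le> (\<Sum>(a, b)\<in>?S. B a b)"
      using le_sum_nonneg_support[of ?S "\<lambda>(a, b). B a b" "(s, t)"] True nonneg by auto
    with True show ?thesis by (simp add: sigma_def)
  next
    case False
    let ?S = "{(a, b). s \<le> a \<and> b \<le> t \<and> B a b \<noteq> 0}"
    have "finite ?S"
      by (rule finite_subset[of _ "{s..t + D} \<times> {s - D..t}"]) (use B in \<open>force dest: bandedD\<close>, simp)
    then have "B s t \<le> (\<Sum>(a, b)\<in>?S. B a b)"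
      using le_sum_nonneg_support[of ?S "\<lambda>(a, b). B a b" "(s, t)"] False \<open>s \<noteq> t\<close> nonneg by auto
    with False show ?thesis by (simp add: sigma_def)
  qed
qed

lemma banded_sigma_eq_0:
  assumes "banded D A" "D < \<bar>s - t\<bar>"
  shows "sigma s t A = 0"
proof -
  have "A a b = 0" if "\<bar>s - t\<bar> \<le> \<bar>a - b\<bar>" for a b
    using bandedD[OF assms(1), of a b] assms(2) that by linarith
  moreover have "\<bar>s - t\<bar> \<le> \<bar>a - b\<bar>" if "a \<le> s" "t \<le> b" "s < t" for a b
    using that by arith
  moreover have "\<bar>s - t\<bar> \<le> \<bar>a - b\<bar>" if "s \<le> a" "b \<le> t" "\<not> s < t" for a b
    using that by arith
  ultimately show ?thesis unfolding sigma_def by (auto intro: sum.neutral)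
qed

lemma preceq_offdiag_bounds:
  assumes "B \<in> Theta_tilde n" "n > 0" "preceq B A" "s \<noteq> t"
  shows "0 \<le> B s t" "B s t \<le> sigma s t A"
proof -
  obtain D where "banded D B" using Theta_tilde_banded assms(1,2) by blast
  show "0 \<le> B s t" using assms(1,4) by (simp add: Theta_tilde_def)
  show "B s t \<le> sigma s t A"
    using Theta_tilde_entry_le_sigma[OF assms(1) \<open>banded D B\<close> assms(4)] assms(3,4)
    by (force simp: preceq_def)
qed

lemma preceq_banded:
  assumes "B \<in> Theta_tilde n" "n > 0" "preceq B A" "banded D A" "D \<ge> 0"
  shows "banded D B"
  unfolding banded_def
proof (intro allI impI)
  fix s t assume "B s t \<noteq> 0"
  show "\<bar>s - t\<bar> \<le> D"
  proof (rule ccontr)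
    assume far: "\<not> \<bar>s - t\<bar> \<le> D"
    with \<open>D \<ge> 0\<close> have "s \<noteq> t" by auto
    have "sigma s t A = 0" using banded_sigma_eq_0[OF \<open>banded D A\<close>] far by simp
    with preceq_offdiag_bounds[OF assms(1-3) \<open>s \<noteq> t\<close>] \<open>B s t \<noteq> 0\<close> show False by simp
  qed
qed

lemma Theta_tilde_offdiag_eq_if_eq_on_rows:
  assumes B: "B \<in> Theta_tilde n" and B': "B' \<in> Theta_tilde n" and n: "n > 0"
    and rows: "\<And>r t. 0 \<le> r \<Longrightarrow> r < n \<Longrightarrow> r \<noteq> t \<Longrightarrow> B r t = B' r t"
    and "s \<noteq> t"
  shows "B s t = B' s t"
proof -
  define r k where "r = s mod n" and "k = s div n"
  have s: "r + k * n = s" unfolding r_def k_def by simp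
  have "r \<noteq> t - k * n" using \<open>s \<noteq> t\<close> s by linarith
  moreover have "0 \<le> r" "r < n" unfolding r_def using n by simp_all
  ultimately have "B r (t - k * n) = B' r (t - k * n)" by (intro rows)
  then show ?thesis
    using Theta_tilde_shift[OF B, of r k "t - k * n"] Theta_tilde_shift[OF B', of r k "t - k * n"]
    unfolding s by simp
qed

lemma banded_offdiag_eq_if_eq_on_window:
  assumes B: "B \<in> Theta_tilde n" "banded D B" and B': "B' \<in> Theta_tilde n" "banded D B'"
    and n: "n > 0"
    and window: "\<And>r t. 0 \<le> r \<Longrightarrow> r < n \<Longrightarrow> - D \<le> t \<Longrightarrow> t \<le> n + D \<Longrightarrow> r \<noteq> t
      \<Longrightarrow> B r t = B' r t"
    and "s \<noteq> t"
  shows "B s t = B' s t"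
proof (rule Theta_tilde_offdiag_eq_if_eq_on_rows[OF B(1) B'(1) n _ \<open>s \<noteq> t\<close>])
  fix r t assume r: "0 \<le> r" "r < n" "r \<noteq> t"
  show "B r t = B' r t"
  proof (cases "- D \<le> t \<and> t \<le> n + D")
    case False
    with r have "D < \<bar>r - t\<bar>" by auto
    with B(2) B'(2) have "B r t = 0" "B' r t = 0" by (meson bandedD not_le)+
    then show ?thesis by simp
  qed (use r window in auto)
qed

lemma zmat_eqI:
  fixes B B' :: zmat
  assumes "\<And>s t. s \<noteq> t \<Longrightarrow> B s t = B' s t" "\<And>i. B i i = B' i i"
  shows "B = B'"
proof (intro ext)
  fix s t show "B s t = B' s t" using assms by (cases "s = t") auto
qed

lemma finite_preceq_if_offdiag_determines:
  assumes A: "A \<in> Theta_tilde n" and n: "n > 0"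
    and F: "F \<subseteq> {B \<in> Theta_tilde n. preceq B A}"
    and offdiag: "\<And>B B'. B \<in> F \<Longrightarrow> B' \<in> F \<Longrightarrow> (\<forall>s t. s \<noteq> t \<longrightarrow> B s t = B' s t) \<Longrightarrow> B = B'"
  shows "finite F"
proof -
  obtain D where "D \<ge> 0" "banded D A" using Theta_tilde_banded[OF A n] .
  define K where "K = {(r, t). 0 \<le> r \<and> r < n \<and> - D \<le> t \<and> t \<le> n + D \<and> r \<noteq> t}"
  define g where "g B = restrict (\<lambda>(r, t). B r t) K" for B :: zmat
  have finK: "finite K"
    by (rule finite_subset[of _ "{0..<n} \<times> {- D..n + D}"]) (auto simp: K_def)
  have "g B \<in> PiE K (\<lambda>(r, t). {0..sigma r t A})" if "B \<in> F" for B
  proof -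
    have "B r t \<in> {0..sigma r t A}" if "(r, t) \<in> K" for r t
      using preceq_offdiag_bounds[of B n A r t] \<open>B \<in> F\<close> F n that by (auto simp: K_def)
    then show ?thesis unfolding g_def restrict_PiE_iff by auto
  qed
  moreover have "finite (PiE K (\<lambda>(r, t). {0..sigma r t A}))"
    using finK by (intro finite_PiE) auto
  ultimately have "finite (g ` F)" by (meson finite_subset image_subsetI)
  moreover have "inj_on g F"
  proof (rule inj_onI)
    fix B B' assume BF: "B \<in> F" and B'F: "B' \<in> F" and "g B = g B'"
    have "B r t = B' r t" if "(r, t) \<in> K" for r t
    proof -
      have "g B (r, t) = g B' (r, t)" using \<open>g B = g B'\<close> by simp
      with that show ?thesis by (simp add: g_def)
    qed
    moreover have "banded D B" "banded D B'"
      using BF B'F F preceq_banded[OF _ n _ \<open>banded D A\<close> \<open>D \<ge> 0\<close>] by auto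
    ultimately have "B s t = B' s t" if "s \<noteq> t" for s t
      using banded_offdiag_eq_if_eq_on_window[of B n D B' s t] BF B'F F n that by (auto simp: K_def)
    then show "B = B'" using BF B'F by (intro offdiag) auto
  qed
  ultimately show ?thesis by (rule finite_imageD)
qed

lemma finite_Theta_pm_prec:
  assumes "A \<in> Theta_pm n" "n > 0"
  shows "finite {B \<in> Theta_pm n. prec B A}"
proof (rule finite_preceq_if_offdiag_determines)
  fix B B' assume "B \<in> {B \<in> Theta_pm n. prec B A}" "B' \<in> {B \<in> Theta_pm n. prec B A}"
    and offdiag: "\<forall>s t. s \<noteq> t \<longrightarrow> B s t = B' s t"
  then have "B i i = B' i i" for i by (simp add: Theta_pm_def)
  with offdiag show "B = B'" by (intro zmat_eqI) auto
qed (use assms in \<open>auto simp: Theta_pm_def prec_def\<close>)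

lemma banded_ro_eq_sum:
  assumes "banded D B"
  shows "ro B i = (\<Sum>j\<in>{i - D..i + D}. B i j)"
  unfolding ro_def
  by (rule sum.mono_neutral_left) (use assms in \<open>force dest: bandedD\<close>)+

lemma banded_diag_eq_if_ro_eq:
  assumes "banded D B" "banded D B'" "D \<ge> 0" "ro B = ro B'"
    and offdiag: "\<forall>s t. s \<noteq> t \<longrightarrow> B s t = B' s t"
  shows "B i i = B' i i"
proof -
  let ?T = "{i - D..i + D}"
  have i: "i \<in> ?T" using \<open>D \<ge> 0\<close> by simp
  have "B i i + (\<Sum>j\<in>?T - {i}. B i j) = ro B i"
    using banded_ro_eq_sum[OF assms(1)] sum.remove[OF _ i] by (metis finite_atLeastAtMost_int)
  also have "\<dots> = ro B' i" using assms(4) by simp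
  also have "\<dots> = B' i i + (\<Sum>j\<in>?T - {i}. B' i j)"
    using banded_ro_eq_sum[OF assms(2)] sum.remove[OF _ i] by (metis finite_atLeastAtMost_int)
  also have "(\<Sum>j\<in>?T - {i}. B' i j) = (\<Sum>j\<in>?T - {i}. B i j)"
    using offdiag by (intro sum.cong) auto
  finally show ?thesis by simp
qed

lemma finite_Theta_tilde_sqsubseteq:
  assumes A: "A \<in> Theta_tilde n" and n: "n > 0"
  shows "finite {B \<in> Theta_tilde n. sqsubseteq B A}"
proof (rule finite_preceq_if_offdiag_determines[OF A n])
  obtain D where "D \<ge> 0" "banded D A" using Theta_tilde_banded[OF A n] .
  fix B B' assume B: "B \<in> {B \<in> Theta_tilde n. sqsubseteq B A}"
    and B': "B' \<in> {B \<in> Theta_tilde n. sqsubseteq B A}"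
    and offdiag: "\<forall>s t. s \<noteq> t \<longrightarrow> B s t = B' s t"
  have "banded D B" "banded D B'"
    using B B' preceq_banded[OF _ n _ \<open>banded D A\<close> \<open>D \<ge> 0\<close>] by (auto simp: sqsubseteq_def)
  moreover have "ro B = ro B'" using B B' by (simp add: sqsubseteq_def)
  ultimately have "B i i = B' i i" for i
    using banded_diag_eq_if_ro_eq \<open>D \<ge> 0\<close> offdiag by blast
  with offdiag show "B = B'" by (intro zmat_eqI) auto
qed (auto simp: sqsubseteq_def)

theorem lemma7p5:
  fixes n :: int
  assumes "n \<ge> 2"
  shows "(\<forall>A \<in> Theta_pm n. finite {B \<in> Theta_pm n. prec B A})
       \<and> (\<forall>A' \<in> Theta_tilde n. finite {B \<in> Theta_tilde n. sqsubseteq B A'})"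
  using assms finite_Theta_pm_prec finite_Theta_tilde_sqsubseteq by simp

end
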